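(* Let $P$ be a finite set of points in $\mathbb{R}^2$ in general position. Any point $p\in P$ is active for at most three points on the first convex layer of $P$.
   Context: Convex layers: $L^1$ is the set of vertices of the convex hull of $P$, and $L^k$ is the set of vertices of the convex hull of $P\setminus(L^1\cup\dots\cup L^{k-1})$. Let $(t,u,v)$ be consecutive points of $L^1$ in clockwise order. A point $p$ is active for $u$ if, upon deleting $u$ from $P$ and recomputing the first and second convex layers, $p$ moves to the first layer. $A(u)$ denotes the set of points active for $u$. *)

theory Defs
  imports "HOL-Analysis.Analysis"
begin

definition general_position :: "(real^2) set \<Rightarrow> bool" where
  "general_position P \<longleftrightarrow>
     (\<forall>a\<in>P. \<forall>b\<in>P. \<forall>c\<in>P. a \<noteq> b \<and> a \<noteq> c \<and> b \<noteq> c \<longrightarrow> \<not> collinear {a, b, c})"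

definition layer1 :: "(real^2) set \<Rightarrow> (real^2) set" where
  "layer1 P = {p \<in> P. p extreme_point_of (convex hull P)}"

fun layer :: "nat \<Rightarrow> (real^2) set \<Rightarrow> (real^2) set" where
  "layer 0 P = {}"
| "layer (Suc 0) P = layer1 P"
| "layer (Suc (Suc k)) P = layer1 (P - (\<Union>i\<in>{1..Suc k}. layer i P))"

definition active :: "(real^2) set \<Rightarrow> real^2 \<Rightarrow> real^2 \<Rightarrow> bool" where
  "active P p u \<longleftrightarrow> u \<in> layer 1 P \<and> p \<in> P \<and> p \<notin> layer 1 P \<and> p \<in> layer 1 (P - {u})"

definition active_set :: "(real^2) set \<Rightarrow> real^2 \<Rightarrow> (real^2) set" where
  "active_set P u = {p. active P p u}"

end

theory Submission
  imports Defs
begin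

text \<open>A point p off the first layer lies in the convex hull of the other points, so by
  Caratheodory's theorem in the plane it lies in the convex hull of a set S of at most three
  other points. Deleting a point u outside S leaves p inside the convex hull of the remaining
  points, so p cannot become extreme. Hence every u for which p is active lies in S.\<close>

lemma extreme_point_not_in_convex_hull_Diff:
  assumes "x extreme_point_of (convex hull T)"
  shows "x \<notin> convex hull (T - {x})"
proof
  assume x: "x \<in> convex hull (T - {x})"
  have "convex (convex hull T - {x})"
    using assms extreme_point_of_stillconvex[of "convex hull T" x] by simp
  moreover have "T - {x} \<subseteq> convex hull T - {x}"
    using hull_subset[of T convex] by blast
  ultimately have "convex hull (T - {x}) \<subseteq> convex hull T - {x}"
    by (simp add: hull_minimal)
  with x show False by blast
qed

lemma extreme_point_of_convex_hull_iff_not_in_convex_hull_Diff: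
  assumes "finite T" and "x \<in> T"
  shows "x extreme_point_of (convex hull T) \<longleftrightarrow> x \<notin> convex hull (T - {x})"
proof
  assume "x \<notin> convex hull (T - {x})"
  then have "x extreme_point_of (convex hull (insert x (T - {x})))"
    using assms(1) by (intro extreme_point_of_convex_hull_insert) auto
  then show "x extreme_point_of (convex hull T)"
    using assms(2) by (simp add: insert_absorb)
qed (rule extreme_point_not_in_convex_hull_Diff)

lemma mem_of_extreme_point_of_convex_hull_Diff:
  assumes "x \<in> convex hull S" and "S \<subseteq> T - {x}"
    and "x extreme_point_of (convex hull (T - {u}))"
  shows "u \<in> S"
proof (rule ccontr)
  assume "u \<notin> S"
  with assms(2) have "convex hull S \<subseteq> convex hull (T - {u} - {x})"
    by (intro hull_mono) blast
  with assms(1) extreme_point_not_in_convex_hull_Diff[OF assms(3)] show False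
    by blast
qed

theorem lemma1:
  fixes P :: "(real^2) set" and p :: "real^2"
  assumes "finite P" and "general_position P" and "p \<in> P"
  shows "card {u \<in> layer 1 P. p \<in> active_set P u} \<le> 3"
proof (cases "p \<in> layer1 P")
  case True
  then show ?thesis
    by (simp add: active_set_def active_def)
next
  case False
  with assms(1,3) have "p \<in> convex hull (P - {p})"
    using extreme_point_of_convex_hull_iff_not_in_convex_hull_Diff by (auto simp: layer1_def)
  then obtain S where S: "finite S" "S \<subseteq> P - {p}" "card S \<le> DIM(real^2) + 1"
    "p \<in> convex hull S"
    using caratheodory[of "P - {p}"] by blast
  have "{u \<in> layer 1 P. p \<in> active_set P u} \<subseteq> S"
    using mem_of_extreme_point_of_convex_hull_Diff[OF S(4)] S(2)
    by (auto simp: active_set_def active_def layer1_def)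
  then have "card {u \<in> layer 1 P. p \<in> active_set P u} \<le> card S"
    using S(1) by (rule card_mono[rotated])
  with S(3) show ?thesis
    by simp
qed

end
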